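(* Let $\Omega\subset\mathbb{Z}^2$ be finite, let $u:\Omega\to\{0,1\}$ be a binary image with foreground $\mathbb{X}=\{y\in\Omega:u(y)=1\}$ and background $\mathbb{X}^c=\Omega\setminus\mathbb{X}$, and let $x\in\Omega$ be a point all of whose eight neighbors lie in $\Omega$. Then $x$ is a simple point if and only if $\mathcal{C}(u_m)[x]=2$.
   Context: Neighborhoods: for $x=(x_1,x_2)$, $\mathbb{N}_4(x)=\{x'\in\Omega:|x_1-x_1'|+|x_2-x_2'|\le1\}$, $\mathbb{N}_8(x)=\{x'\in\Omega:\max(|x_1-x_1'|,|x_2-x_2'|)\le1\}$, $\mathring{\mathbb{N}}_n(x)=\mathbb{N}_n(x)\setminus\{x\}$. Foreground is 8-connected, background 4-connected. Geodesic neighborhoods w.r.t. $\mathbb{Y}\subset\Omega$: $\mathbb{N}^1_n(x,\mathbb{Y})=\mathring{\mathbb{N}}_n(x)\cap\mathbb{Y}$, $\mathbb{N}^k_n(x,\mathbb{Y})=\bigcup\{\mathbb{N}_n(y)\cap\mathring{\mathbb{N}}_8(x)\cap\mathbb{Y}:y\in\mathbb{N}^{k-1}_n(x,\mathbb{Y})\}$ for $k\ge2$. $T_4(x,\mathbb{Y})$ = number of 4-connected components of $\mathbb{N}^2_4(x,\mathbb{Y})$; $T_8(x,\mathbb{Y})$ = number of 8-connected components of $\mathbb{N}^1_8(x,\mathbb{Y})$. $x$ is a simple point iff $T_4(x,\mathbb{X}^c)=1$ and $T_8(x,\mathbb{X})=1$. Cyclic neighborhood: label the eight neighbors of $x$ as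 $x_1$ (top-left), $x_2$ (top), $x_3$ (top-right), $x_4$ (right), $x_5$ (bottom-right), $x_6$ (bottom), $x_7$ (bottom-left), $x_8$ (left), and set $x_9=x_1$. For a binary function $f$ on these neighbors, the crossing number is $\mathcal{C}(f)[x]=\sum_{i=1}^8\delta(|f(x_{i+1})-f(x_i)|)$ with $\delta(1)=1,\delta(0)=0$, i.e. the number of value changes $0\to1$ or $1\to0$ going once around the cycle. Define $m$ on $\mathring{\mathbb{N}}_8(x)$ by $m(y)=1$ if $y\in\mathbb{N}^2_4(x,\mathbb{X}^c)$ and $m(y)=0$ otherwise, and $u_m(y)=1-m(y)(1-u(y))$ (so $u_m(y)=0$ exactly when $y\in\mathbb{N}^2_4(x,\mathbb{X}^c)$). *)

theory Defs
  imports Main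
begin

type_synonym pt = "int \<times> int"

definition N4 :: "pt set \<Rightarrow> pt \<Rightarrow> pt set" where
  "N4 \<Omega> x = {x' \<in> \<Omega>. \<bar>fst x - fst x'\<bar> + \<bar>snd x - snd x'\<bar> \<le> 1}"

definition N8 :: "pt set \<Rightarrow> pt \<Rightarrow> pt set" where
  "N8 \<Omega> x = {x' \<in> \<Omega>. max \<bar>fst x - fst x'\<bar> \<bar>snd x - snd x'\<bar> \<le> 1}"

definition Nb :: "nat \<Rightarrow> pt set \<Rightarrow> pt \<Rightarrow> pt set" where
  "Nb n \<Omega> x = (if n = 4 then N4 \<Omega> x else N8 \<Omega> x)"

definition Nbo :: "nat \<Rightarrow> pt set \<Rightarrow> pt \<Rightarrow> pt set" where
  "Nbo n \<Omega> x = Nb n \<Omega> x - {x}"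

text \<open>Geodesic neighborhoods N^k_n(x,Y) (k \<ge> 1; k = 0 unused).\<close>
fun geoN :: "nat \<Rightarrow> nat \<Rightarrow> pt set \<Rightarrow> pt \<Rightarrow> pt set \<Rightarrow> pt set" where
  "geoN n 0 \<Omega> x Y = {}"
| "geoN n (Suc 0) \<Omega> x Y = Nbo n \<Omega> x \<inter> Y"
| "geoN n (Suc (Suc k)) \<Omega> x Y =
     (\<Union>y \<in> geoN n (Suc k) \<Omega> x Y. Nb n \<Omega> y \<inter> Nbo 8 \<Omega> x \<inter> Y)"

definition adj4 :: "(pt \<times> pt) set" where
  "adj4 = {(a, b). \<bar>fst a - fst b\<bar> + \<bar>snd a - snd b\<bar> = 1}"

definition adj8 :: "(pt \<times> pt) set" where
  "adj8 = {(a, b). max \<bar>fst a - fst b\<bar> \<bar>snd a - snd b\<bar> = 1}"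

definition conn :: "(pt \<times> pt) set \<Rightarrow> pt set \<Rightarrow> (pt \<times> pt) set" where
  "conn E S = (Restr E S)\<^sup>* \<inter> (S \<times> S)"

definition ncomp :: "(pt \<times> pt) set \<Rightarrow> pt set \<Rightarrow> nat" where
  "ncomp E S = card (S // conn E S)"

definition T4 :: "pt set \<Rightarrow> pt \<Rightarrow> pt set \<Rightarrow> nat" where
  "T4 \<Omega> x Y = ncomp adj4 (geoN 4 2 \<Omega> x Y)"

definition T8 :: "pt set \<Rightarrow> pt \<Rightarrow> pt set \<Rightarrow> nat" where
  "T8 \<Omega> x Y = ncomp adj8 (geoN 8 1 \<Omega> x Y)"

definition foreground :: "pt set \<Rightarrow> (pt \<Rightarrow> int) \<Rightarrow> pt set" where
  "foreground \<Omega> u = {y \<in> \<Omega>. u y = 1}"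

definition simple_point :: "pt set \<Rightarrow> (pt \<Rightarrow> int) \<Rightarrow> pt \<Rightarrow> bool" where
  "simple_point \<Omega> u x \<longleftrightarrow>
     T4 \<Omega> x (\<Omega> - foreground \<Omega> u) = 1 \<and> T8 \<Omega> x (foreground \<Omega> u) = 1"

text \<open>Cyclic neighborhood x_1..x_8 (x_9 = x_1); first coordinate = row (increasing downward),
  second coordinate = column (increasing to the right).\<close>
definition cnb :: "pt \<Rightarrow> nat \<Rightarrow> pt" where
  "cnb x i = (let (a, b) = x in
     (if i = 1 \<or> i = 9 then (a - 1, b - 1)
      else if i = 2 then (a - 1, b)
      else if i = 3 then (a - 1, b + 1)
      else if i = 4 then (a, b + 1)
      else if i = 5 then (a + 1, b + 1)
      else if i = 6 then (a + 1, b)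
      else if i = 7 then (a + 1, b - 1)
      else (a, b - 1)))"

definition delta :: "int \<Rightarrow> nat" where
  "delta t = (if t = 1 then 1 else 0)"

definition crossing :: "(pt \<Rightarrow> int) \<Rightarrow> pt \<Rightarrow> nat" where
  "crossing f x = (\<Sum>i = 1..8. delta \<bar>f (cnb x (i + 1)) - f (cnb x i)\<bar>)"

definition mfun :: "pt set \<Rightarrow> (pt \<Rightarrow> int) \<Rightarrow> pt \<Rightarrow> pt \<Rightarrow> int" where
  "mfun \<Omega> u x y = (if y \<in> geoN 4 2 \<Omega> x (\<Omega> - foreground \<Omega> u) then 1 else 0)"

definition um :: "pt set \<Rightarrow> (pt \<Rightarrow> int) \<Rightarrow> pt \<Rightarrow> pt \<Rightarrow> int" where
  "um \<Omega> u x y = 1 - mfun \<Omega> u x y * (1 - u y)"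

end

theory Submission
  imports Defs
begin

text \<open>Both sides of the equivalence depend only on which of the eight neighbours of x are
  foreground. Indexing the neighbours by the positions 1..8 of the cyclic neighbourhood, the
  sets N^1_8(x, X) and N^2_4(x, X^c) become sets of positions, and their connectivity becomes
  connectivity of position sets under the adjacency of the corresponding offsets. Connectivity of
  such a set is decided by growing a region from its first position; this turns the theorem into a
  property of the 256 foreground configurations, which is checked exhaustively.\<close>

lemma atLeastAtMost_1_8: "{1..8::nat} = {1, 2, 3, 4, 5, 6, 7, 8}"
  by auto

lemma sum_atLeastAtMost_1_8:
  "(\<Sum>i = 1..8. f i) = f (1 :: nat) + f 2 + f 3 + f 4 + f 5 + f 6 + f 7 + (f 8 :: 'a :: comm_monoid_add)"
  unfolding atLeastAtMost_1_8 by (simp add: ac_simps)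

subsection \<open>Connected sets of a relation\<close>

definition connected_in :: "'a rel \<Rightarrow> 'a set \<Rightarrow> bool" where
  "connected_in E S \<longleftrightarrow> S \<noteq> {} \<and> (\<forall>a\<in>S. \<forall>b\<in>S. (a, b) \<in> (Restr E S)\<^sup>*)"

lemma ncomp_eq_1_iff:
  assumes "sym E"
  shows "ncomp E S = 1 \<longleftrightarrow> connected_in E S"
proof -
  let ?r = "conn E S"
  have sym_Restr: "sym (Restr E S)"
    using assms by (auto simp: sym_def)
  have equiv: "equiv S ?r"
    unfolding equiv_def refl_on_def sym_def trans_def conn_def
    using sym_Restr by (auto intro: rtrancl_trans dest: symD[OF sym_rtrancl[OF sym_Restr]])
  show ?thesis
  proof
    assume "ncomp E S = 1"
    then obtain C where C: "S // ?r = {C}"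
      unfolding ncomp_def by (meson card_1_singletonE)
    have "(a, b) \<in> (Restr E S)\<^sup>*" if "a \<in> S" "b \<in> S" for a b
    proof -
      have "?r `` {a} = C" "?r `` {b} = C"
        using C that by (auto intro: quotientI)
      moreover have "b \<in> ?r `` {b}"
        using equiv that by (meson equiv_class_self)
      ultimately show ?thesis
        by (auto simp: conn_def)
    qed
    moreover have "S \<noteq> {}"
      using C by auto
    ultimately show "connected_in E S"
      by (simp add: connected_in_def)
  next
    assume "connected_in E S"
    then have "S // ?r = {S}"
      unfolding quotient_def connected_in_def by (auto simp: conn_def)
    then show "ncomp E S = 1"
      by (simp add: ncomp_def)
  qed
qed

lemma rtrancl_Restr_image_iff:
  assumes inj: "inj_on p A" and "i \<in> A" "j \<in> A"
  shows "(p i, p j) \<in> (Restr E (p ` A))\<^sup>* \<longleftrightarrow> (i, j) \<in> (Restr (inv_image E p) A)\<^sup>*"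
proof
  assume "(p i, p j) \<in> (Restr E (p ` A))\<^sup>*"
  then have "\<forall>k\<in>A. p k = p j \<longrightarrow> (i, k) \<in> (Restr (inv_image E p) A)\<^sup>*"
  proof (induction rule: rtrancl_induct)
    case base
    then show ?case
      using inj \<open>i \<in> A\<close> by (auto dest: inj_onD)
  next
    case (step y z)
    then obtain y' where "y' \<in> A" "y = p y'" "(i, y') \<in> (Restr (inv_image E p) A)\<^sup>*"
      by blast
    with step.hyps(2) show ?case
      by (auto intro: rtrancl_into_rtrancl)
  qed
  then show "(i, j) \<in> (Restr (inv_image E p) A)\<^sup>*"
    using \<open>j \<in> A\<close> by blast
next
  assume "(i, j) \<in> (Restr (inv_image E p) A)\<^sup>*"
  then show "(p i, p j) \<in> (Restr E (p ` A))\<^sup>*"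
    by (induction rule: rtrancl_induct) (auto intro: rtrancl_into_rtrancl)
qed

lemma connected_in_image_iff:
  assumes "inj_on p A"
  shows "connected_in E (p ` A) \<longleftrightarrow> connected_in (inv_image E p) A"
  using rtrancl_Restr_image_iff[OF assms] by (auto simp: connected_in_def)

lemma connected_in_iff_component:
  assumes "sym E" and "a \<in> S"
  shows "connected_in E S \<longleftrightarrow> {b \<in> S. (a, b) \<in> (Restr E S)\<^sup>*} = S"
proof -
  have "sym ((Restr E S)\<^sup>*)"
    using assms(1) by (intro sym_rtrancl) (auto simp: sym_def)
  then show ?thesis
    using assms(2) unfolding connected_in_def by (blast dest: symD intro: rtrancl_trans)
qed

definition offset :: "nat \<Rightarrow> pt" where
  "offset i = cnb (0, 0) i"

lemma offset_simps:
  "offset 1 = (-1, -1)" "offset 2 = (-1, 0)" "offset 3 = (-1, 1)" "offset 4 = (0, 1)"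
  "offset 5 = (1, 1)" "offset 6 = (1, 0)" "offset 7 = (1, -1)" "offset 8 = (0, -1)"
  "offset (Suc 0) = (-1, -1)"
  by (simp_all add: offset_def cnb_def)

lemma cnb_eq_offset: "cnb x i = (fst x + fst (offset i), snd x + snd (offset i))"
  by (cases x) (simp add: offset_def cnb_def)

lemma cnb_9: "cnb x 9 = cnb x 1"
  by (simp add: cnb_def)

lemma inj_on_cnb: "inj_on (cnb x) {1..8}"
proof -
  have "inj_on offset {1..8}"
    unfolding inj_on_def atLeastAtMost_1_8 by (auto simp: offset_simps)
  then show ?thesis
    by (auto simp: inj_on_def cnb_eq_offset prod_eq_iff)
qed

lemma inv_image_adj4_cnb: "inv_image adj4 (cnb x) = inv_image adj4 offset"
  by (auto simp: inv_image_def adj4_def cnb_eq_offset)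

lemma inv_image_adj8_cnb: "inv_image adj8 (cnb x) = inv_image adj8 offset"
  by (auto simp: inv_image_def adj8_def cnb_eq_offset)

lemma sym_adj4: "sym adj4"
  by (auto simp: sym_def adj4_def abs_minus_commute)

lemma sym_adj8: "sym adj8"
  by (auto simp: sym_def adj8_def abs_minus_commute)

lemma Nbo_8_eq_cnb_image:
  assumes "\<forall>i\<in>{1..8}. cnb x i \<in> \<Omega>"
  shows "Nbo 8 \<Omega> x = cnb x ` {1..8}"
proof
  show "cnb x ` {1..8} \<subseteq> Nbo 8 \<Omega> x"
  proof (rule image_subsetI)
    fix i :: nat assume i: "i \<in> {1..8}"
    then have "max \<bar>fst (offset i)\<bar> \<bar>snd (offset i)\<bar> = 1"
      unfolding atLeastAtMost_1_8 by (auto simp: offset_simps)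
    then show "cnb x i \<in> Nbo 8 \<Omega> x"
      using i assms by (auto simp: Nbo_def Nb_def N8_def cnb_eq_offset prod_eq_iff)
  qed
next
  show "Nbo 8 \<Omega> x \<subseteq> cnb x ` {1..8}"
  proof
    fix y assume y: "y \<in> Nbo 8 \<Omega> x"
    define d1 where "d1 = fst y - fst x"
    define d2 where "d2 = snd y - snd x"
    have y_eq: "y = (fst x + d1, snd x + d2)"
      by (simp add: d1_def d2_def)
    have "\<bar>d1\<bar> \<le> 1" "\<bar>d2\<bar> \<le> 1" "\<not> (d1 = 0 \<and> d2 = 0)"
      using y by (auto simp: Nbo_def Nb_def N8_def d1_def d2_def prod_eq_iff)
    then have "d1 \<in> {-1, 0, 1}" "d2 \<in> {-1, 0, 1}" "\<not> (d1 = 0 \<and> d2 = 0)"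
      by auto
    then show "y \<in> cnb x ` {1..8}"
      unfolding y_eq atLeastAtMost_1_8 by (auto simp: cnb_eq_offset offset_simps image_iff)
  qed
qed

lemma Nbo_4_subset_cnb_image: "Nbo 4 \<Omega> x \<subseteq> cnb x ` {2, 4, 6, 8}"
proof
  fix y assume y: "y \<in> Nbo 4 \<Omega> x"
  define d1 where "d1 = fst y - fst x"
  define d2 where "d2 = snd y - snd x"
  have y_eq: "y = (fst x + d1, snd x + d2)"
    by (simp add: d1_def d2_def)
  have "\<bar>d1\<bar> + \<bar>d2\<bar> \<le> 1" "\<not> (d1 = 0 \<and> d2 = 0)"
    using y by (auto simp: Nbo_def Nb_def N4_def d1_def d2_def prod_eq_iff)
  then have "(d1, d2) \<in> {(-1, 0), (0, 1), (1, 0), (0, -1)}"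
    by auto
  then show "y \<in> cnb x ` {2, 4, 6, 8}"
    unfolding y_eq by (auto simp: cnb_eq_offset offset_simps image_iff)
qed

lemma cnb_in_Nbo_4: "cnb x j \<in> \<Omega> \<Longrightarrow> j \<in> {2, 4, 6, 8} \<Longrightarrow> cnb x j \<in> Nbo 4 \<Omega> x"
  by (auto simp: Nbo_def Nb_def N4_def cnb_eq_offset prod_eq_iff offset_simps)

subsection \<open>Deciding connectivity of masks\<close>

datatype mask8 = Mask bool bool bool bool bool bool bool bool

fun cell :: "mask8 \<Rightarrow> nat \<Rightarrow> bool" where
  "cell (Mask b1 b2 b3 b4 b5 b6 b7 b8) i =
    (if i = 1 then b1 else if i = 2 then b2 else if i = 3 then b3 else if i = 4 then b4
     else if i = 5 then b5 else if i = 6 then b6 else if i = 7 then b7 else b8)"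

definition support :: "mask8 \<Rightarrow> nat set" where
  "support z = {j \<in> {1..8}. cell z j}"

definition empty_mask :: mask8 where
  "empty_mask = Mask False False False False False False False False"

lemma mask8_eqI:
  assumes "\<And>j. j \<in> {1..8} \<Longrightarrow> cell v j = cell w j"
  shows "v = w"
  using assms[of 1] assms[of 2] assms[of 3] assms[of 4] assms[of 5] assms[of 6] assms[of 7] assms[of 8]
  by (cases v; cases w) simp

lemma support_eq_empty_iff: "support z = {} \<longleftrightarrow> z = empty_mask"
proof
  assume "support z = {}"
  then show "z = empty_mask"
    by (intro mask8_eqI) (auto simp: support_def empty_mask_def)
qed (simp add: support_def empty_mask_def)

definition propagates :: "nat rel \<Rightarrow> (mask8 \<Rightarrow> mask8 \<Rightarrow> mask8) \<Rightarrow> bool" where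
  "propagates R step \<longleftrightarrow> (\<forall>z a. \<forall>j\<in>{1..8}.
     cell (step z a) j \<longleftrightarrow> cell a j \<or> cell z j \<and> (\<exists>i\<in>{1..8}. cell a i \<and> (i, j) \<in> R))"

fun first_cell :: "mask8 \<Rightarrow> mask8" where
  "first_cell (Mask z1 z2 z3 z4 z5 z6 z7 z8) =
    Mask z1 (\<not> z1 \<and> z2) (\<not> z1 \<and> \<not> z2 \<and> z3) (\<not> z1 \<and> \<not> z2 \<and> \<not> z3 \<and> z4)
      (\<not> z1 \<and> \<not> z2 \<and> \<not> z3 \<and> \<not> z4 \<and> z5) (\<not> z1 \<and> \<not> z2 \<and> \<not> z3 \<and> \<not> z4 \<and> \<not> z5 \<and> z6)
      (\<not> z1 \<and> \<not> z2 \<and> \<not> z3 \<and> \<not> z4 \<and> \<not> z5 \<and> \<not> z6 \<and> z7)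
      (\<not> z1 \<and> \<not> z2 \<and> \<not> z3 \<and> \<not> z4 \<and> \<not> z5 \<and> \<not> z6 \<and> \<not> z7 \<and> z8)"

lemma first_cell_singleton:
  assumes "z \<noteq> empty_mask"
  obtains a where "a \<in> support z" "\<And>j. j \<in> {1..8} \<Longrightarrow> cell (first_cell z) j \<longleftrightarrow> j = a"
proof -
  have "\<exists>a\<in>{1..8}. cell z a \<and> (\<forall>j\<in>{1..8}. cell (first_cell z) j \<longleftrightarrow> j = a)"
  proof (cases z)
    case (Mask z1 z2 z3 z4 z5 z6 z7 z8)
    then show ?thesis
      using assms unfolding atLeastAtMost_1_8
      by (cases z1; cases z2; cases z3; cases z4; cases z5; cases z6; cases z7; cases z8;
          simp add: empty_mask_def)
  qed
  then show ?thesis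
    using that by (auto simp: support_def)
qed

text \<open>Seven rounds reach the whole component of the seed, as a path through eight cells has
  at most seven edges; instead of proving this, closure of the result is checked case by case.\<close>

definition spread :: "(mask8 \<Rightarrow> mask8 \<Rightarrow> mask8) \<Rightarrow> mask8 \<Rightarrow> mask8" where
  "spread step z = (step z ^^ 7) (first_cell z)"

definition connected_mask :: "(mask8 \<Rightarrow> mask8 \<Rightarrow> mask8) \<Rightarrow> mask8 \<Rightarrow> bool" where
  "connected_mask step z \<longleftrightarrow> z \<noteq> empty_mask \<and> spread step z = z"

lemma support_spread_eq_component:
  assumes propagation: "propagates R step"
    and fixed: "step z (spread step z) = spread step z"
    and a: "a \<in> support z" "\<And>j. j \<in> {1..8} \<Longrightarrow> cell (first_cell z) j \<longleftrightarrow> j = a"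
  shows "support (spread step z) = {b \<in> support z. (a, b) \<in> (Restr R (support z))\<^sup>*}"
    (is "_ = ?C")
proof
  have cell_step: "cell (step z c) j \<longleftrightarrow> cell c j \<or> cell z j \<and> (\<exists>i\<in>{1..8}. cell c i \<and> (i, j) \<in> R)"
    if "j \<in> {1..8}" for c j
    using propagation that by (simp add: propagates_def)
  have "\<forall>j\<in>support ((step z ^^ n) (first_cell z)). j \<in> ?C" for n
  proof (induction n)
    case 0
    then show ?case
      using a by (auto simp: support_def)
  next
    case (Suc n)
    then show ?case
      by (fastforce simp: support_def cell_step intro: rtrancl_into_rtrancl)
  qed
  then show "support (spread step z) \<subseteq> ?C"
    by (auto simp: spread_def)
  have "a \<in> support ((step z ^^ n) (first_cell z))" for n
    using a by (induction n) (auto simp: support_def cell_step)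
  then have a_spread: "a \<in> support (spread step z)"
    by (simp add: spread_def)
  show "?C \<subseteq> support (spread step z)"
  proof clarify
    fix b assume "(a, b) \<in> (Restr R (support z))\<^sup>*"
    then show "b \<in> support (spread step z)"
    proof (induction rule: rtrancl_induct)
      case base
      then show ?case
        using a_spread .
    next
      case (step c d)
      then have "cell (step z (spread step z)) d"
        by (auto simp: support_def cell_step)
      then show ?case
        using step.hyps(2) by (simp add: fixed support_def)
    qed
  qed
qed

lemma connected_in_support_iff:
  assumes "propagates R step" and "sym R"
    and "step z (spread step z) = spread step z"
  shows "connected_in R (support z) \<longleftrightarrow> connected_mask step z"
proof (cases "z = empty_mask")
  case True
  then show ?thesis
    by (simp add: connected_in_def connected_mask_def support_eq_empty_iff)
next
  case False
  then obtain a where a: "a \<in> support z" "\<And>j. j \<in> {1..8} \<Longrightarrow> cell (first_cell z) j \<longleftrightarrow> j = a"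
    using first_cell_singleton by blast
  have "spread step z = z \<longleftrightarrow> support (spread step z) = support z"
  proof
    assume "support (spread step z) = support z"
    then show "spread step z = z"
      by (intro mask8_eqI) (auto simp: support_def set_eq_iff)
  qed simp
  then show ?thesis
    using False support_spread_eq_component[OF assms(1,3) a]
      connected_in_iff_component[OF assms(2) a(1)]
    by (simp add: connected_mask_def)
qed

text \<open>One propagation round for the 4- and the 8-adjacency, written out cell by cell so that the
  checks below run by simplification alone.\<close>

fun step4 :: "mask8 \<Rightarrow> mask8 \<Rightarrow> mask8" where
  "step4 (Mask z1 z2 z3 z4 z5 z6 z7 z8) (Mask a1 a2 a3 a4 a5 a6 a7 a8) =
    Mask (a1 \<or> z1 \<and> (a8 \<or> a2)) (a2 \<or> z2 \<and> (a1 \<or> a3)) (a3 \<or> z3 \<and> (a2 \<or> a4))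
      (a4 \<or> z4 \<and> (a3 \<or> a5)) (a5 \<or> z5 \<and> (a4 \<or> a6)) (a6 \<or> z6 \<and> (a5 \<or> a7))
      (a7 \<or> z7 \<and> (a6 \<or> a8)) (a8 \<or> z8 \<and> (a7 \<or> a1))"

fun step8 :: "mask8 \<Rightarrow> mask8 \<Rightarrow> mask8" where
  "step8 (Mask z1 z2 z3 z4 z5 z6 z7 z8) (Mask a1 a2 a3 a4 a5 a6 a7 a8) =
    Mask (a1 \<or> z1 \<and> (a8 \<or> a2)) (a2 \<or> z2 \<and> (a1 \<or> a3 \<or> a4 \<or> a8)) (a3 \<or> z3 \<and> (a2 \<or> a4))
      (a4 \<or> z4 \<and> (a3 \<or> a5 \<or> a2 \<or> a6)) (a5 \<or> z5 \<and> (a4 \<or> a6))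
      (a6 \<or> z6 \<and> (a5 \<or> a7 \<or> a4 \<or> a8)) (a7 \<or> z7 \<and> (a6 \<or> a8))
      (a8 \<or> z8 \<and> (a7 \<or> a1 \<or> a6 \<or> a2))"

lemma propagates_step4: "propagates (inv_image adj4 offset) step4"
  unfolding propagates_def
proof (intro allI ballI)
  fix z a and j :: nat assume "j \<in> {1..8}"
  then show "cell (step4 z a) j \<longleftrightarrow>
      cell a j \<or> cell z j \<and> (\<exists>i\<in>{1..8}. cell a i \<and> (i, j) \<in> inv_image adj4 offset)"
    unfolding atLeastAtMost_1_8
    by (cases z; cases a) (elim insertE; simp add: adj4_def offset_simps; blast)
qed

lemma propagates_step8: "propagates (inv_image adj8 offset) step8"
  unfolding propagates_def
proof (intro allI ballI)
  fix z a and j :: nat assume "j \<in> {1..8}"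
  then show "cell (step8 z a) j \<longleftrightarrow>
      cell a j \<or> cell z j \<and> (\<exists>i\<in>{1..8}. cell a i \<and> (i, j) \<in> inv_image adj8 offset)"
    unfolding atLeastAtMost_1_8
    by (cases z; cases a) (elim insertE; simp add: adj8_def offset_simps; blast)
qed

fun geo_background :: "mask8 \<Rightarrow> mask8" where
  "geo_background (Mask b1 b2 b3 b4 b5 b6 b7 b8) =
    Mask (\<not> b1 \<and> (\<not> b8 \<or> \<not> b2)) (\<not> b2) (\<not> b3 \<and> (\<not> b2 \<or> \<not> b4)) (\<not> b4)
      (\<not> b5 \<and> (\<not> b4 \<or> \<not> b6)) (\<not> b6) (\<not> b7 \<and> (\<not> b6 \<or> \<not> b8)) (\<not> b8)"

fun mask_crossing :: "mask8 \<Rightarrow> nat" where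
  "mask_crossing (Mask z1 z2 z3 z4 z5 z6 z7 z8) =
    of_bool (z1 \<noteq> z2) + of_bool (z2 \<noteq> z3) + of_bool (z3 \<noteq> z4) + of_bool (z4 \<noteq> z5) +
    of_bool (z5 \<noteq> z6) + of_bool (z6 \<noteq> z7) + of_bool (z7 \<noteq> z8) + of_bool (z8 \<noteq> z1)"

lemma spread_step4_fixed: "step4 z (spread step4 z) = spread step4 z"
proof (cases z)
  case (Mask z1 z2 z3 z4 z5 z6 z7 z8)
  then show ?thesis
    by (cases z1; cases z2; cases z3; cases z4; cases z5; cases z6; cases z7; cases z8;
        simp add: spread_def eval_nat_numeral)
qed

lemma spread_step8_fixed: "step8 z (spread step8 z) = spread step8 z"
proof (cases z)
  case (Mask z1 z2 z3 z4 z5 z6 z7 z8)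
  then show ?thesis
    by (cases z1; cases z2; cases z3; cases z4; cases z5; cases z6; cases z7; cases z8;
        simp add: spread_def eval_nat_numeral)
qed

lemma connected_masks_iff_crossing:
  "connected_mask step4 (geo_background b) \<and> connected_mask step8 b
     \<longleftrightarrow> mask_crossing (geo_background b) = 2"
proof (cases b)
  case (Mask b1 b2 b3 b4 b5 b6 b7 b8)
  then show ?thesis
    by (cases b1; cases b2; cases b3; cases b4; cases b5; cases b6; cases b7; cases b8;
        simp add: connected_mask_def spread_def empty_mask_def eval_nat_numeral)
qed

subsection \<open>From the image to masks\<close>

definition foreground_mask :: "(pt \<Rightarrow> int) \<Rightarrow> pt \<Rightarrow> mask8" where
  "foreground_mask u x = Mask (u (cnb x 1) = 1) (u (cnb x 2) = 1) (u (cnb x 3) = 1)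
     (u (cnb x 4) = 1) (u (cnb x 5) = 1) (u (cnb x 6) = 1) (u (cnb x 7) = 1) (u (cnb x 8) = 1)"

lemma cell_foreground_mask: "i \<in> {1..8} \<Longrightarrow> cell (foreground_mask u x) i \<longleftrightarrow> u (cnb x i) = 1"
  unfolding atLeastAtMost_1_8 by (elim insertE) (auto simp: foreground_mask_def)

lemma cell_geo_background:
  "i \<in> {1..8} \<Longrightarrow> cell (geo_background b) i \<longleftrightarrow> \<not> cell b i \<and>
     (\<exists>j\<in>{2, 4, 6, 8}. \<not> cell b j \<and>
        \<bar>fst (offset j) - fst (offset i)\<bar> + \<bar>snd (offset j) - snd (offset i)\<bar> \<le> 1)"
  unfolding atLeastAtMost_1_8 by (cases b) (elim insertE; simp add: offset_simps; blast)

lemma inj_on_cnb_support: "inj_on (cnb x) (support z)"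
  by (rule inj_on_subset[OF inj_on_cnb]) (auto simp: support_def)

lemma geoN_8_1_foreground:
  assumes "\<forall>i\<in>{1..8}. cnb x i \<in> \<Omega>"
  shows "geoN 8 1 \<Omega> x (foreground \<Omega> u) = cnb x ` support (foreground_mask u x)"
  using assms
  by (auto simp: Nbo_8_eq_cnb_image[OF assms] foreground_def support_def cell_foreground_mask)

lemma geoN_4_2_background:
  assumes nbhd: "\<forall>i\<in>{1..8}. cnb x i \<in> \<Omega>"
  shows "geoN 4 2 \<Omega> x (\<Omega> - foreground \<Omega> u) = cnb x ` support (geo_background (foreground_mask u x))"
    (is "?N = cnb x ` support ?z")
proof
  show "?N \<subseteq> cnb x ` support ?z"
  proof
    fix y assume "y \<in> ?N"
    then obtain y' where y': "y' \<in> Nbo 4 \<Omega> x" "u y' \<noteq> 1"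
      and y: "y \<in> N4 \<Omega> y'" "y \<in> Nbo 8 \<Omega> x" "u y \<noteq> 1"
      by (auto simp: numeral_2_eq_2 Nb_def foreground_def)
    obtain j where j: "j \<in> {2, 4, 6, 8}" "y' = cnb x j"
      using Nbo_4_subset_cnb_image y'(1) by blast
    obtain i where i: "i \<in> {1..8}" "y = cnb x i"
      using y(2) Nbo_8_eq_cnb_image[OF nbhd] by blast
    have "j \<in> {1..8}"
      using j(1) by auto
    then have "cell ?z i"
      using i j y y' by (auto simp: cell_geo_background cell_foreground_mask N4_def cnb_eq_offset)
    then show "y \<in> cnb x ` support ?z"
      using i by (auto simp: support_def)
  qed
next
  show "cnb x ` support ?z \<subseteq> ?N"
  proof (rule image_subsetI)
    fix i assume "i \<in> support ?z"
    then have i: "i \<in> {1..8}" "cell ?z i"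
      by (auto simp: support_def)
    then obtain j where j: "j \<in> {2, 4, 6, 8}" "u (cnb x j) \<noteq> 1" "u (cnb x i) \<noteq> 1"
      "\<bar>fst (offset j) - fst (offset i)\<bar> + \<bar>snd (offset j) - snd (offset i)\<bar> \<le> 1"
      by (force simp: cell_geo_background cell_foreground_mask)
    have "cnb x j \<in> Nbo 4 \<Omega> x"
      using nbhd j(1) by (intro cnb_in_Nbo_4) auto
    moreover have "cnb x i \<in> N4 \<Omega> (cnb x j)"
      using i(1) nbhd j(4) by (auto simp: N4_def cnb_eq_offset)
    moreover have "cnb x i \<in> Nbo 8 \<Omega> x"
      using i(1) Nbo_8_eq_cnb_image[OF nbhd] by blast
    ultimately show "cnb x i \<in> ?N"
      using i(1) j(1-3) nbhd by (auto simp: numeral_2_eq_2 Nb_def foreground_def)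
  qed
qed

lemma T8_foreground_eq_1_iff:
  assumes "\<forall>i\<in>{1..8}. cnb x i \<in> \<Omega>"
  shows "T8 \<Omega> x (foreground \<Omega> u) = 1 \<longleftrightarrow> connected_mask step8 (foreground_mask u x)"
  unfolding T8_def geoN_8_1_foreground[OF assms] ncomp_eq_1_iff[OF sym_adj8]
    connected_in_image_iff[OF inj_on_cnb_support] inv_image_adj8_cnb
  by (rule connected_in_support_iff[OF propagates_step8 sym_inv_image[OF sym_adj8] spread_step8_fixed])

lemma T4_background_eq_1_iff:
  assumes "\<forall>i\<in>{1..8}. cnb x i \<in> \<Omega>"
  shows "T4 \<Omega> x (\<Omega> - foreground \<Omega> u) = 1 \<longleftrightarrow>
    connected_mask step4 (geo_background (foreground_mask u x))"
  unfolding T4_def geoN_4_2_background[OF assms] ncomp_eq_1_iff[OF sym_adj4]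
    connected_in_image_iff[OF inj_on_cnb_support] inv_image_adj4_cnb
  by (rule connected_in_support_iff[OF propagates_step4 sym_inv_image[OF sym_adj4] spread_step4_fixed])

lemma um_cnb:
  assumes binary: "\<forall>y\<in>\<Omega>. u y \<in> {0, 1}" and nbhd: "\<forall>i\<in>{1..8}. cnb x i \<in> \<Omega>"
    and i: "i \<in> {1..8}"
  shows "um \<Omega> u x (cnb x i) = (if cell (geo_background (foreground_mask u x)) i then 0 else 1)"
proof -
  let ?z = "geo_background (foreground_mask u x)"
  have "cnb x i \<in> geoN 4 2 \<Omega> x (\<Omega> - foreground \<Omega> u) \<longleftrightarrow> cell ?z i"
    using i inj_onD[OF inj_on_cnb[of x]]
    by (auto simp: geoN_4_2_background[OF nbhd] support_def)
  moreover have "u (cnb x i) = 0" if "cell ?z i"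
    using that i binary nbhd by (auto simp: cell_geo_background cell_foreground_mask)
  ultimately show ?thesis
    by (auto simp: um_def mfun_def)
qed

lemma crossing_um:
  assumes "\<forall>y\<in>\<Omega>. u y \<in> {0, 1}" and "\<forall>i\<in>{1..8}. cnb x i \<in> \<Omega>"
  shows "crossing (um \<Omega> u x) x = mask_crossing (geo_background (foreground_mask u x))"
  unfolding crossing_def sum_atLeastAtMost_1_8
  by (cases "geo_background (foreground_mask u x)")
    (simp add: cnb_9 um_cnb[OF assms] delta_def)

theorem theorem2:
  fixes \<Omega> :: "(int \<times> int) set" and u :: "int \<times> int \<Rightarrow> int" and x :: "int \<times> int"
  assumes "finite \<Omega>"
    and "\<forall>y \<in> \<Omega>. u y \<in> {0, 1}"
    and "x \<in> \<Omega>"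
    and "\<forall>i \<in> {1..8}. cnb x i \<in> \<Omega>"
  shows "simple_point \<Omega> u x \<longleftrightarrow> crossing (um \<Omega> u x) x = 2"
proof -
  let ?b = "foreground_mask u x"
  have "simple_point \<Omega> u x \<longleftrightarrow> connected_mask step4 (geo_background ?b) \<and> connected_mask step8 ?b"
    using T4_background_eq_1_iff[OF assms(4)] T8_foreground_eq_1_iff[OF assms(4)]
    by (simp add: simple_point_def)
  also have "\<dots> \<longleftrightarrow> mask_crossing (geo_background ?b) = 2"
    by (rule connected_masks_iff_crossing)
  also have "\<dots> \<longleftrightarrow> crossing (um \<Omega> u x) x = 2"
    by (simp add: crossing_um[OF assms(2,4)])
  finally show ?thesis .
qed

end
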